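(* Let $p\in(0,1)$ and let $\Phi,\phi$ be the standard normal c.d.f. and p.d.f. For $k\in\mathbb{N}$ let $h_k^{(1)}(\infty)$ be the unique real solution $h$ of $\int_{-\infty}^{\infty}\Phi^k(t+h)\phi(t)\,dt=p$ and let $h_k^{(2)}(\infty)$ be the unique real solution $h$ of $\Big[\int_{-\infty}^{\infty}\Phi(t+h)\phi(t)\,dt\Big]^k=p$. Then, as $k\to\infty$, $h_k^{(2)}(\infty)\sim\sqrt2\,h_k^{(1)}(\infty)\sim2\sqrt{\ln(k)}$.
   Context: $a_k\sim b_k$ means $a_k/b_k\to1$ as $k\to\infty$. These are the analogues, for Student's $t$ with $\nu=\infty$ degrees of freedom (i.e. the standard normal), of the constants of Dudewicz–Dalal's and Rinott's two-stage selection procedures. *)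

theory Defs
  imports "HOL-Probability.Probability" "HOL-Library.Landau_Symbols"
begin

definition phi :: "real \<Rightarrow> real" where
  "phi = std_normal_density"

definition Phi :: "real \<Rightarrow> real" where
  "Phi x = (LBINT t:{..x}. phi t)"

definition h1 :: "real \<Rightarrow> nat \<Rightarrow> real" where
  "h1 p k = (THE h. (LINT t|lborel. (Phi (t + h)) ^ k * phi t) = p)"

definition h2 :: "real \<Rightarrow> nat \<Rightarrow> real" where
  "h2 p k = (THE h. (LINT t|lborel. Phi (t + h) * phi t) ^ k = p)"

end

theory Submission
  imports Defs
begin

text \<open>
  Write \<open>a k = sqrt (2 ln k)\<close>. Since \<open>1 - \<Phi> x \<le> exp (- x\<^sup>2 / 2)\<close> and \<open>1 - \<Phi> x \<ge> \<phi> (x + 1)\<close>,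
  the power \<open>\<Phi> (c a k) ^ k\<close> tends to 1 for \<open>c > 1\<close> (by Bernoulli, \<open>\<Phi> ^ k \<ge> 1 - k (1 - \<Phi>) \<ge> 1 - k^(1 - c\<^sup>2)\<close>)
  and to 0 for \<open>c < 1\<close> (\<open>\<Phi> ^ k \<le> exp (- k (1 - \<Phi>))\<close> with \<open>k \<phi> (c a k + 1) \<rightarrow> \<infinity>\<close>). Cutting the
  integral \<open>\<integral> \<Phi> (t + h) ^ k \<phi> t dt\<close> at \<open>t = \<plusminus>\<delta> a k\<close> transfers both limits to it, so its root
  \<open>h1 p k\<close> eventually lies in \<open>[(1 - \<epsilon>) a k, (1 + \<epsilon>) a k]\<close>. For \<open>h2 p k\<close> the same argument is
  applied to \<open>(\<integral> \<Phi> (t + h) \<phi> t dt) ^ k\<close>: the integral is the distribution function of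
  \<open>Z' - Z \<sim> N(0, 2)\<close>, whose tail behaves like \<open>exp (- h\<^sup>2 / 4)\<close>, which changes the scale to
  \<open>2 sqrt (ln k) = sqrt 2 * a k\<close>.
\<close>

section \<open>The standard normal density and distribution function\<close>

lemma phi_eq_exp: "phi t = exp (- t\<^sup>2 / 2) / sqrt (2 * pi)"
  unfolding phi_def std_normal_density_def by simp

lemma phi_pos: "0 < phi t"
  unfolding phi_def by (simp add: normal_density_pos)

lemma phi_le_one: "phi t \<le> 1"
proof -
  have "exp (- t\<^sup>2 / 2) \<le> 1" by simp
  moreover have "1 \<le> sqrt (2 * pi)" using pi_gt3 by simp
  ultimately have "exp (- t\<^sup>2 / 2) \<le> sqrt (2 * pi)" by linarith
  then show ?thesis unfolding phi_eq_exp by (simp add: divide_le_eq)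
qed

lemma phi_antimono_abs: "\<bar>s\<bar> \<le> \<bar>t\<bar> \<Longrightarrow> phi t \<le> phi s"
  unfolding phi_eq_exp by (intro divide_right_mono) (auto simp: abs_le_square_iff)

lemma phi_measurable [measurable]: "phi \<in> borel_measurable borel"
  unfolding phi_def by simp

lemma integrable_phi [simp, intro]: "integrable lborel phi"
  unfolding phi_def by simp

lemma integral_phi: "(LINT t|lborel. phi t) = 1"
  unfolding phi_def by simp

lemma integrable_bounded_mult_phi:
  assumes "g \<in> borel_measurable lborel" "\<And>t. \<bar>g t\<bar> \<le> B"
  shows "integrable lborel (\<lambda>t. g t * phi t)"
proof (rule Bochner_Integration.integrable_bound[of lborel "\<lambda>t. B * phi t"])
  show "(\<lambda>t. g t * phi t) \<in> borel_measurable lborel" using assms(1) by measurable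
  show "AE t in lborel. norm (g t * phi t) \<le> norm (B * phi t)"
    using assms(2) by (auto simp: abs_mult intro!: mult_right_mono order.trans[OF _ abs_ge_self]
        less_imp_le[OF phi_pos])
qed simp

lemma integrable_indicator_mult_phi:
  "A \<in> sets borel \<Longrightarrow> integrable lborel (\<lambda>t. indicator A t * phi t)"
  by (rule integrable_bounded_mult_phi) auto

lemma integrable_indicator_Ioc_mult_const:
  "(a::real) \<le> b \<Longrightarrow> integrable lborel (\<lambda>t. indicator {a<..b} t * (c::real))"
  using emeasure_lborel_Ioc[of a b]
  by (intro integrable_mult_left) (auto simp: integrable_indicator_iff ennreal_less_top)

lemma integral_indicator_Ioc_mult_const:
  "(a::real) \<le> b \<Longrightarrow> (LINT t|lborel. indicator {a<..b} t * c) = (b - a) * (c::real)"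
proof -
  assume "a \<le> b"
  then have "measure lborel {a<..b} = b - a"
    by (simp add: measure_def del: measure_lborel_Ioc)
  then show ?thesis by (simp add: integral_mult_left_zero del: measure_lborel_Ioc)
qed

lemma integral_indicator_Un_mult_phi:
  assumes "A \<in> sets borel" "B \<in> sets borel" "A \<inter> B = {}"
  shows "(LINT t|lborel. indicator (A \<union> B) t * phi t) =
         (LINT t|lborel. indicator A t * phi t) + (LINT t|lborel. indicator B t * phi t)"
proof -
  have "(\<lambda>t. indicator (A \<union> B) t * phi t) = (\<lambda>t. indicator A t * phi t + indicator B t * phi t)"
    using assms(3) by (auto simp: indicator_def fun_eq_iff)
  then show ?thesis using integrable_indicator_mult_phi assms by simp
qed

lemma Phi_eq_integral: "Phi x = (LINT t|lborel. indicator {..x} t * phi t)"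
  unfolding Phi_def set_lebesgue_integral_def by simp

lemma one_minus_Phi_eq_integral: "1 - Phi x = (LINT t|lborel. indicator {x<..} t * phi t)"
proof -
  have "{..x} \<union> {x<..} = UNIV" by auto
  then have "(LINT t|lborel. indicator ({..x} \<union> {x<..}) t * phi t) = 1"
    by (simp add: integral_phi)
  moreover have "{..x} \<inter> {x<..} = {}" by auto
  ultimately show ?thesis
    using integral_indicator_Un_mult_phi[of "{..x}" "{x<..}"] Phi_eq_integral[of x] by auto
qed

lemma Phi_diff_eq_integral:
  assumes "a \<le> b"
  shows "Phi b - Phi a = (LINT t|lborel. indicator {a<..b} t * phi t)"
proof -
  have "{..a} \<union> {a<..b} = {..b}" "{..a} \<inter> {a<..b} = {}" using assms by auto
  then show ?thesis
    using integral_indicator_Un_mult_phi[of "{..a}" "{a<..b}"] Phi_eq_integral[of a]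
      Phi_eq_integral[of b] by auto
qed

lemma Phi_diff_le:
  assumes "a \<le> b"
  shows "Phi b - Phi a \<le> b - a"
proof -
  have "Phi b - Phi a \<le> (LINT t|lborel. indicator {a<..b} t * 1)"
    unfolding Phi_diff_eq_integral[OF assms]
    by (intro integral_mono integrable_indicator_mult_phi integrable_indicator_Ioc_mult_const assms)
      (auto simp: indicator_def phi_le_one)
  then show ?thesis using integral_indicator_Ioc_mult_const[OF assms, of 1] unfolding mult_1_right by linarith
qed

lemma Phi_diff_ge:
  assumes "a \<le> b" "\<And>t. a < t \<Longrightarrow> t \<le> b \<Longrightarrow> m \<le> phi t"
  shows "(b - a) * m \<le> Phi b - Phi a"
proof -
  have "(LINT t|lborel. indicator {a<..b} t * m) \<le> Phi b - Phi a"
    unfolding Phi_diff_eq_integral[OF assms(1)]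
    by (intro integral_mono integrable_indicator_mult_phi integrable_indicator_Ioc_mult_const assms)
      (auto simp: indicator_def assms(2))
  then show ?thesis using integral_indicator_Ioc_mult_const[OF assms(1), of m] by linarith
qed

lemma Phi_mono: "a \<le> b \<Longrightarrow> Phi a \<le> Phi b"
  using Phi_diff_ge[of a b 0] phi_pos by (fastforce intro: less_imp_le)

lemma Phi_nonneg: "0 \<le> Phi x"
  unfolding Phi_eq_integral
  by (intro integral_nonneg_AE) (auto intro!: AE_I2 mult_nonneg_nonneg less_imp_le[OF phi_pos])

lemma Phi_le_one: "Phi x \<le> 1"
proof -
  have "0 \<le> 1 - Phi x"
    unfolding one_minus_Phi_eq_integral
    by (intro integral_nonneg_AE) (auto intro!: AE_I2 mult_nonneg_nonneg less_imp_le[OF phi_pos])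
  then show ?thesis by simp
qed

lemma Phi_pos: "0 < Phi a"
proof -
  have "(a - (a - 1)) * phi (\<bar>a\<bar> + 1) \<le> Phi a - Phi (a - 1)"
    by (intro Phi_diff_ge phi_antimono_abs) auto
  then show ?thesis using phi_pos[of "\<bar>a\<bar> + 1"] Phi_nonneg[of "a - 1"] by simp
qed

lemma Phi_lipschitz: "\<bar>Phi a - Phi b\<bar> \<le> \<bar>a - b\<bar>"
  using Phi_diff_le[of a b] Phi_diff_le[of b a] Phi_mono[of a b] Phi_mono[of b a]
  by (cases "a \<le> b") auto

lemma continuous_on_Phi: "continuous_on UNIV Phi"
  by (rule lipschitz_on_continuous_on[of 1])
    (auto intro!: lipschitz_onI simp: dist_real_def Phi_lipschitz)

lemma Phi_measurable [measurable]: "Phi \<in> borel_measurable borel"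
  by (rule borel_measurable_continuous_onI[OF continuous_on_Phi])

text \<open>The density of \<open>N(x, 1)\<close> dominates \<open>exp (x\<^sup>2/2) \<phi>\<close> on the side of \<open>x\<close> away from 0,
  which yields Chernoff-type tail bounds after integration.\<close>

lemma phi_le_shifted_density:
  assumes "0 \<le> x * y"
  shows "phi (x + y) \<le> exp (- x\<^sup>2 / 2) * normal_density x 1 (x + y)"
proof -
  have "exp (- (x + y)\<^sup>2 / 2) \<le> exp (- x\<^sup>2 / 2 + - y\<^sup>2 / 2)"
    using assms by (simp add: power2_eq_square algebra_simps) (simp add: field_simps)
  then have "exp (- (x + y)\<^sup>2 / 2) \<le> exp (- x\<^sup>2 / 2) * exp (- y\<^sup>2 / 2)"
    by (metis exp_add)
  then show ?thesis unfolding phi_eq_exp normal_density_def by (simp add: divide_right_mono)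
qed

lemma one_minus_Phi_le_exp:
  assumes "0 \<le> x"
  shows "1 - Phi x \<le> exp (- x\<^sup>2 / 2)"
proof -
  have "1 - Phi x \<le> (LINT t|lborel. exp (- x\<^sup>2 / 2) * normal_density x 1 t)"
    unfolding one_minus_Phi_eq_integral
  proof (intro integral_mono integrable_indicator_mult_phi)
    fix t
    show "indicator {x<..} t * phi t \<le> exp (- x\<^sup>2 / 2) * normal_density x 1 t"
      using phi_le_shifted_density[of x "t - x"] assms by (auto simp: indicator_def)
  qed auto
  then show ?thesis by simp
qed

lemma Phi_neg_le_exp:
  assumes "0 \<le> x"
  shows "Phi (- x) \<le> exp (- x\<^sup>2 / 2)"
proof -
  have "Phi (- x) \<le> (LINT t|lborel. exp (- (- x)\<^sup>2 / 2) * normal_density (- x) 1 t)"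
    unfolding Phi_eq_integral
  proof (intro integral_mono integrable_indicator_mult_phi)
    fix t
    show "indicator {..- x} t * phi t \<le> exp (- (- x)\<^sup>2 / 2) * normal_density (- x) 1 t"
      using phi_le_shifted_density[of "- x" "t + x"] assms
      by (auto simp: indicator_def mult_nonneg_nonpos)
  qed auto
  then show ?thesis by simp
qed

lemma phi_le_one_minus_Phi:
  assumes "0 \<le> x"
  shows "phi (x + 1) \<le> 1 - Phi x"
proof -
  have "(x + 1 - x) * phi (x + 1) \<le> Phi (x + 1) - Phi x"
    using assms by (intro Phi_diff_ge phi_antimono_abs) auto
  then show ?thesis using Phi_le_one[of "x + 1"] by simp
qed

section \<open>The integral of \<open>\<Phi> (t + h) ^ k\<close> against \<open>\<phi>\<close>\<close>

definition mean_Phi_pow :: "nat \<Rightarrow> real \<Rightarrow> real" where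
  "mean_Phi_pow k h = (LINT t|lborel. Phi (t + h) ^ k * phi t)"

lemma integrable_Phi_pow_mult_phi: "integrable lborel (\<lambda>t. Phi (t + h) ^ k * phi t)"
  by (rule integrable_bounded_mult_phi[where B = 1]) (auto simp: Phi_nonneg Phi_le_one power_le_one)

lemma mean_Phi_pow_diff:
  "mean_Phi_pow k b - mean_Phi_pow k a = (LINT t|lborel. (Phi (t + b) ^ k - Phi (t + a) ^ k) * phi t)"
  unfolding mean_Phi_pow_def using integrable_Phi_pow_mult_phi by (simp add: left_diff_distrib)

lemma integrable_Phi_pow_diff_mult_phi:
  "integrable lborel (\<lambda>t. (Phi (t + b) ^ k - Phi (t + a) ^ k) * phi t)"
  using integrable_Phi_pow_mult_phi[of a k] integrable_Phi_pow_mult_phi[of b k]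
  by (simp add: left_diff_distrib)

lemma mean_Phi_pow_nonneg: "0 \<le> mean_Phi_pow k h"
  unfolding mean_Phi_pow_def
  by (intro integral_nonneg_AE AE_I2 mult_nonneg_nonneg zero_le_power Phi_nonneg less_imp_le[OF phi_pos])

lemma mean_Phi_pow_le_one: "mean_Phi_pow k h \<le> 1"
proof -
  have "mean_Phi_pow k h \<le> (LINT t|lborel. phi t)"
    unfolding mean_Phi_pow_def
  proof (rule integral_mono[OF integrable_Phi_pow_mult_phi integrable_phi])
    fix t show "Phi (t + h) ^ k * phi t \<le> phi t"
      using phi_pos[of t] by (simp add: mult_left_le_one_le Phi_nonneg Phi_le_one power_le_one)
  qed
  then show ?thesis by (simp add: integral_phi)
qed

lemma abs_power_diff_le:
  fixes x y :: real
  assumes "0 \<le> x" "x \<le> 1" "0 \<le> y" "y \<le> 1"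
  shows "\<bar>x ^ k - y ^ k\<bar> \<le> real k * \<bar>x - y\<bar>"
proof (induction k)
  case (Suc k)
  have "x ^ Suc k - y ^ Suc k = x * (x ^ k - y ^ k) + (x - y) * y ^ k"
    by (simp add: algebra_simps)
  also have "\<bar>\<dots>\<bar> \<le> \<bar>x ^ k - y ^ k\<bar> + \<bar>x - y\<bar>"
    using assms by (intro order.trans[OF abs_triangle_ineq] add_mono)
      (simp_all add: abs_mult mult_left_le_one_le mult_right_le_one_le power_le_one)
  finally show ?case using Suc.IH by (simp add: algebra_simps)
qed simp

lemma mean_Phi_pow_lipschitz: "\<bar>mean_Phi_pow k a - mean_Phi_pow k b\<bar> \<le> real k * \<bar>a - b\<bar>"
proof -
  let ?C = "real k * \<bar>a - b\<bar>"
  have pointwise: "\<bar>Phi (t + a) ^ k - Phi (t + b) ^ k\<bar> \<le> ?C" for t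
    using abs_power_diff_le[of "Phi (t + a)" "Phi (t + b)" k] Phi_lipschitz[of "t + a" "t + b"]
      Phi_nonneg Phi_le_one
    by (smt (verit, best) mult_left_mono of_nat_0_le_iff)
  have "mean_Phi_pow k a - mean_Phi_pow k b \<le> (LINT t|lborel. ?C * phi t)"
    unfolding mean_Phi_pow_diff
  proof (intro integral_mono integrable_Phi_pow_diff_mult_phi)
    fix t show "(Phi (t + a) ^ k - Phi (t + b) ^ k) * phi t \<le> ?C * phi t"
      using pointwise[of t] phi_pos[of t] by (intro mult_right_mono) auto
  qed auto
  moreover have "(LINT t|lborel. - ?C * phi t) \<le> mean_Phi_pow k a - mean_Phi_pow k b"
    unfolding mean_Phi_pow_diff
  proof (intro integral_mono integrable_Phi_pow_diff_mult_phi)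
    fix t show "- ?C * phi t \<le> (Phi (t + a) ^ k - Phi (t + b) ^ k) * phi t"
      using pointwise[of t] phi_pos[of t] by (intro mult_right_mono) auto
  qed auto
  ultimately show ?thesis by (simp add: integral_phi abs_le_iff)
qed

lemma continuous_on_mean_Phi_pow: "continuous_on UNIV (mean_Phi_pow k)"
  by (rule lipschitz_on_continuous_on[of "real k"])
    (auto intro!: lipschitz_onI simp: dist_real_def mean_Phi_pow_lipschitz)

lemma power_diff_ge:
  fixes x y :: real
  assumes "0 \<le> y" "y \<le> x" "0 < k"
  shows "(x - y) * x ^ (k - 1) \<le> x ^ k - y ^ k"
proof -
  have "y ^ k = y * y ^ (k - 1)" "x ^ k = x * x ^ (k - 1)"
    using assms(3) by (simp_all add: power_eq_if)
  moreover have "y * y ^ (k - 1) \<le> y * x ^ (k - 1)"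
    using assms by (intro mult_left_mono power_mono) auto
  ultimately show ?thesis by (simp add: algebra_simps)
qed

text \<open>The increment of the integrand on \<open>t \<in> (0, 1]\<close> is bounded below by a positive constant.\<close>

lemma strict_mono_mean_Phi_pow:
  assumes "0 < k"
  shows "strict_mono (mean_Phi_pow k)"
proof (rule strict_monoI)
  fix a b :: real
  assume "a < b"
  define M where "M = \<bar>a\<bar> + \<bar>b\<bar> + 1"
  define c where "c = (b - a) * phi M * Phi a ^ (k - 1) * phi 1"
  have incr: "c \<le> (Phi (t + b) ^ k - Phi (t + a) ^ k) * phi t" if "0 < t" "t \<le> 1" for t
  proof -
    have "(t + b - (t + a)) * phi M \<le> Phi (t + b) - Phi (t + a)"
      using \<open>a < b\<close> that by (intro Phi_diff_ge phi_antimono_abs) (auto simp: M_def)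
    then have "(b - a) * phi M \<le> Phi (t + b) - Phi (t + a)" by simp
    moreover have "Phi a ^ (k - 1) \<le> Phi (t + b) ^ (k - 1)"
      using that \<open>a < b\<close> by (intro power_mono Phi_mono Phi_nonneg) auto
    ultimately have "(b - a) * phi M * Phi a ^ (k - 1) \<le>
        (Phi (t + b) - Phi (t + a)) * Phi (t + b) ^ (k - 1)"
      using \<open>a < b\<close> phi_pos[of M] Phi_mono[of "t + a" "t + b"]
      by (intro mult_mono) (auto simp: Phi_nonneg)
    also have "\<dots> \<le> Phi (t + b) ^ k - Phi (t + a) ^ k"
      using \<open>a < b\<close> assms by (intro power_diff_ge Phi_nonneg Phi_mono) auto
    finally show ?thesis
      unfolding c_def using that phi_pos[of 1] phi_antimono_abs[of t 1] \<open>a < b\<close>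
        power_mono[OF Phi_mono[of "t + a" "t + b"] Phi_nonneg, of k]
      by (intro mult_mono) auto
  qed
  have "(LINT t|lborel. indicator {0<..1::real} t * c) \<le> mean_Phi_pow k b - mean_Phi_pow k a"
    unfolding mean_Phi_pow_diff
  proof (rule integral_mono[OF integrable_indicator_Ioc_mult_const integrable_Phi_pow_diff_mult_phi])
    fix t
    have "0 \<le> (Phi (t + b) ^ k - Phi (t + a) ^ k) * phi t"
      using \<open>a < b\<close> phi_pos[of t] by (simp add: power_mono Phi_mono Phi_nonneg)
    then show "indicator {0<..1} t * c \<le> (Phi (t + b) ^ k - Phi (t + a) ^ k) * phi t"
      using incr[of t] by (auto simp: indicator_def)
  qed simp
  moreover have "0 < c" unfolding c_def using \<open>a < b\<close> phi_pos Phi_pos by simp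
  ultimately show "mean_Phi_pow k a < mean_Phi_pow k b"
    using integral_indicator_Ioc_mult_const[of 0 1 c] by simp
qed

lemma mean_Phi_pow_ge: "Phi (h - s) ^ k * (1 - Phi (- s)) \<le> mean_Phi_pow k h"
proof -
  have "(LINT t|lborel. Phi (h - s) ^ k * (indicator {- s<..} t * phi t)) \<le> mean_Phi_pow k h"
    unfolding mean_Phi_pow_def
  proof (intro integral_mono integrable_Phi_pow_mult_phi integrable_mult_right
      integrable_indicator_mult_phi)
    fix t
    have "- s < t \<Longrightarrow> Phi (h - s) ^ k \<le> Phi (t + h) ^ k"
      by (intro power_mono Phi_mono Phi_nonneg) auto
    then show "Phi (h - s) ^ k * (indicator {- s<..} t * phi t) \<le> Phi (t + h) ^ k * phi t"
      using phi_pos[of t] by (auto simp: indicator_def Phi_nonneg intro: mult_right_mono)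
  qed auto
  then show ?thesis by (simp add: one_minus_Phi_eq_integral)
qed

lemma mean_Phi_pow_le: "mean_Phi_pow k h \<le> Phi (h + s) ^ k + (1 - Phi s)"
proof -
  have "mean_Phi_pow k h \<le> (LINT t|lborel. Phi (h + s) ^ k * phi t + indicator {s<..} t * phi t)"
    unfolding mean_Phi_pow_def
  proof (intro integral_mono integrable_Phi_pow_mult_phi Bochner_Integration.integrable_add
      integrable_mult_right integrable_indicator_mult_phi integrable_phi)
    fix t
    show "Phi (t + h) ^ k * phi t \<le> Phi (h + s) ^ k * phi t + indicator {s<..} t * phi t"
    proof (cases "t \<le> s")
      case True
      then have "Phi (t + h) ^ k \<le> Phi (h + s) ^ k" by (intro power_mono Phi_mono Phi_nonneg) auto
      then show ?thesis using True phi_pos[of t] by (simp add: mult_right_mono)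
    next
      case False
      have "Phi (t + h) ^ k * phi t \<le> phi t"
        using phi_pos[of t] by (simp add: mult_left_le_one_le Phi_nonneg Phi_le_one power_le_one)
      moreover have "0 \<le> Phi (h + s) ^ k * phi t" using phi_pos[of t] by (simp add: Phi_nonneg)
      ultimately show ?thesis using False by simp
    qed
  qed auto
  also have "\<dots> = Phi (h + s) ^ k + (1 - Phi s)"
    using integrable_indicator_mult_phi[of "{s<..}"] by (simp add: one_minus_Phi_eq_integral integral_phi)
  finally show ?thesis .
qed

text \<open>For \<open>k = 1\<close> the integral is \<open>P(Z' - Z \<le> h)\<close> with \<open>Z' - Z \<sim> N(0, 2)\<close>; completing the square
  in the integrand gives its tail bounds without computing the convolution.\<close>

lemma exp_square_mult_phi:
  "exp (- (t + h)\<^sup>2 / 2) * phi t = exp (- h\<^sup>2 / 4) / sqrt 2 * normal_density (- h / 2) (1 / sqrt 2) t"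
proof -
  have "- (t + h)\<^sup>2 / 2 + - t\<^sup>2 / 2 = - h\<^sup>2 / 4 + - (t - - h / 2)\<^sup>2"
    by (simp add: power2_eq_square field_simps)
  then have "exp (- (t + h)\<^sup>2 / 2) * exp (- t\<^sup>2 / 2) = exp (- h\<^sup>2 / 4) * exp (- (t - - h / 2)\<^sup>2)"
    by (metis exp_add)
  moreover have "sqrt (2 * pi) = sqrt 2 * sqrt pi" by (simp add: real_sqrt_mult)
  moreover have "normal_density (- h / 2) (1 / sqrt 2) t = exp (- (t - - h / 2)\<^sup>2) / sqrt pi"
    unfolding normal_density_def by (simp add: power_divide)
  ultimately show ?thesis unfolding phi_eq_exp by (simp add: field_simps)
qed

lemma one_minus_mean_Phi_eq_integral:
  "1 - mean_Phi_pow 1 h = (LINT t|lborel. (1 - Phi (t + h)) * phi t)"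
  unfolding mean_Phi_pow_def using integrable_Phi_pow_mult_phi[of h 1]
  by (simp add: left_diff_distrib integral_phi)

lemma integrable_one_minus_Phi_mult_phi: "integrable lborel (\<lambda>t. (1 - Phi (t + h)) * phi t)"
  by (rule integrable_bounded_mult_phi[where B = 1]) (auto simp: Phi_nonneg Phi_le_one)

lemma one_minus_mean_Phi_le_exp:
  assumes "0 \<le> h"
  shows "1 - mean_Phi_pow 1 h \<le> 2 * exp (- h\<^sup>2 / 4)"
proof -
  let ?g = "\<lambda>t. exp (- h\<^sup>2 / 4) / sqrt 2 * normal_density (- h / 2) (1 / sqrt 2) t
              + exp (- (- h)\<^sup>2 / 2) * normal_density (- h) 1 t"
  have "1 - mean_Phi_pow 1 h \<le> (LINT t|lborel. ?g t)"
    unfolding one_minus_mean_Phi_eq_integral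
  proof (rule integral_mono[OF integrable_one_minus_Phi_mult_phi])
    fix t
    show "(1 - Phi (t + h)) * phi t \<le> ?g t"
    proof (cases "0 \<le> t + h")
      case True
      have "(1 - Phi (t + h)) * phi t \<le> exp (- (t + h)\<^sup>2 / 2) * phi t"
        using one_minus_Phi_le_exp[OF True] phi_pos[of t] by (intro mult_right_mono) auto
      moreover have "0 \<le> exp (- (- h)\<^sup>2 / 2) * normal_density (- h) 1 t" by simp
      ultimately show ?thesis unfolding exp_square_mult_phi by linarith
    next
      case False
      have "phi (- h + (t + h)) \<le> exp (- (- h)\<^sup>2 / 2) * normal_density (- h) 1 (- h + (t + h))"
        using assms False by (intro phi_le_shifted_density) (simp add: mult_nonneg_nonpos)
      then have "phi t \<le> exp (- (- h)\<^sup>2 / 2) * normal_density (- h) 1 t" by simp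
      moreover have "(1 - Phi (t + h)) * phi t \<le> phi t"
        using Phi_nonneg[of "t + h"] phi_pos[of t] by (simp add: mult_left_le_one_le)
      moreover have "0 \<le> exp (- h\<^sup>2 / 4) / sqrt 2 * normal_density (- h / 2) (1 / sqrt 2) t" by simp
      ultimately show ?thesis by linarith
    qed
  qed auto
  also have "\<dots> = exp (- h\<^sup>2 / 4) / sqrt 2 + exp (- h\<^sup>2 / 2)" by simp
  also have "\<dots> \<le> exp (- h\<^sup>2 / 4) + exp (- h\<^sup>2 / 4)"
    by (intro add_mono) (simp_all add: divide_le_eq)
  finally show ?thesis by simp
qed

lemma phi_square_le_one_minus_mean_Phi:
  assumes "0 \<le> h"
  shows "phi (h / 2 + 1) ^ 2 \<le> 1 - mean_Phi_pow 1 h"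
proof -
  have "(LINT t|lborel. indicator {- h / 2 - 1<..- h / 2} t * phi (h / 2 + 1) ^ 2) \<le> 1 - mean_Phi_pow 1 h"
    unfolding one_minus_mean_Phi_eq_integral
  proof (rule integral_mono[OF integrable_indicator_Ioc_mult_const integrable_one_minus_Phi_mult_phi])
    fix t
    show "indicator {- h / 2 - 1<..- h / 2} t * phi (h / 2 + 1) ^ 2 \<le> (1 - Phi (t + h)) * phi t"
    proof (cases "- h / 2 - 1 < t \<and> t \<le> - h / 2")
      case True
      have "phi (h / 2 + 1) \<le> 1 - Phi (h / 2)" using phi_le_one_minus_Phi[of "h / 2"] assms by simp
      also have "\<dots> \<le> 1 - Phi (t + h)" using True Phi_mono[of "t + h" "h / 2"] by simp
      finally have "phi (h / 2 + 1) ^ 2 \<le> (1 - Phi (t + h)) * phi t"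
        unfolding power2_eq_square using True assms phi_pos[of "h / 2 + 1"]
        by (intro mult_mono phi_antimono_abs) auto
      then show ?thesis using True by simp
    next
      case False
      have "0 \<le> (1 - Phi (t + h)) * phi t" using Phi_le_one[of "t + h"] phi_pos[of t] by simp
      then show ?thesis using False by (auto simp: indicator_def)
    qed
  qed simp
  then show ?thesis
    using integral_indicator_Ioc_mult_const[of "- h / 2 - 1" "- h / 2" "phi (h / 2 + 1) ^ 2"] by simp
qed

section \<open>Asymptotics at the scale \<open>sqrt (ln k)\<close>\<close>

lemma one_minus_mult_le_power:
  fixes x :: real
  assumes "0 \<le> x" "x \<le> 1"
  shows "1 - real k * (1 - x) \<le> x ^ k"
  using Bernoulli_inequality[of "x - 1" k] assms by (simp add: algebra_simps)

lemma power_le_exp_neg_mult: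
  fixes x :: real
  assumes "0 \<le> x"
  shows "x ^ k \<le> exp (- (real k * (1 - x)))"
proof -
  have "x ^ k \<le> exp (- (1 - x)) ^ k"
    using assms exp_ge_add_one_self[of "x - 1"] by (intro power_mono) auto
  also have "\<dots> = exp (- (real k * (1 - x)))" by (simp add: exp_of_nat_mult[symmetric] algebra_simps)
  finally show ?thesis .
qed

lemma Phi_power_ge:
  assumes "0 \<le> x"
  shows "1 - real k * exp (- x\<^sup>2 / 2) \<le> Phi x ^ k"
  using one_minus_mult_le_power[of "Phi x" k] Phi_nonneg[of x] Phi_le_one[of x] one_minus_Phi_le_exp[OF assms]
  by (smt (verit) mult_left_mono of_nat_0_le_iff)

lemma Phi_power_le:
  assumes "0 \<le> x"
  shows "Phi x ^ k \<le> exp (- (real k * phi (x + 1)))"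
  using power_le_exp_neg_mult[of "Phi x" k] Phi_nonneg[of x] phi_le_one_minus_Phi[OF assms]
  by (smt (verit) exp_mono mult_left_mono of_nat_0_le_iff)

lemma mean_Phi_power_ge:
  assumes "0 \<le> h"
  shows "1 - real k * (2 * exp (- h\<^sup>2 / 4)) \<le> mean_Phi_pow 1 h ^ k"
  using one_minus_mult_le_power[of "mean_Phi_pow 1 h" k] mean_Phi_pow_nonneg[of 1 h]
    mean_Phi_pow_le_one[of 1 h]
    one_minus_mean_Phi_le_exp[OF assms]
  by (smt (verit) mult_left_mono of_nat_0_le_iff)

lemma mean_Phi_power_le:
  assumes "0 \<le> h"
  shows "mean_Phi_pow 1 h ^ k \<le> exp (- (real k * phi (h / 2 + 1) ^ 2))"
  using power_le_exp_neg_mult[of "mean_Phi_pow 1 h" k] mean_Phi_pow_nonneg[of 1 h]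
    phi_square_le_one_minus_mean_Phi[OF assms]
  by (smt (verit) exp_mono mult_left_mono of_nat_0_le_iff)

lemma ln_of_nat_nonneg: "0 \<le> ln (real k)"
  by (cases k) auto

lemma tendsto_exp_neg_mult_ln:
  assumes "0 < c"
  shows "(\<lambda>k. exp (- c * ln (real k))) \<longlonglongrightarrow> 0"
proof -
  have "filterlim (\<lambda>k. - c * ln (real k)) at_bot sequentially"
    using assms by (intro filterlim_tendsto_neg_mult_at_bot tendsto_const
        filterlim_compose[OF ln_at_top filterlim_real_sequentially]) auto
  then show ?thesis by (rule filterlim_compose[OF exp_at_bot])
qed

lemma tendsto_real_mult_exp_neg_mult_ln:
  assumes "1 < c"
  shows "(\<lambda>k. real k * exp (- c * ln (real k))) \<longlonglongrightarrow> 0"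
proof (rule Lim_transform_eventually)
  show "(\<lambda>k. exp (- (c - 1) * ln (real k))) \<longlonglongrightarrow> 0"
    using assms by (intro tendsto_exp_neg_mult_ln) auto
  show "eventually (\<lambda>k. exp (- (c - 1) * ln (real k)) = real k * exp (- c * ln (real k))) sequentially"
  proof (rule eventually_sequentiallyI[of 1])
    fix k :: nat
    assume "1 \<le> k"
    then have "real k = exp (ln (real k))" by simp
    then have "real k * exp (- c * ln (real k)) = exp (ln (real k) + - c * ln (real k))"
      by (metis exp_add)
    then show "exp (- (c - 1) * ln (real k)) = real k * exp (- c * ln (real k))"
      by (simp add: algebra_simps)
  qed
qed

text \<open>The exponent is \<open>ln k - (\<alpha> sqrt (ln k) + \<beta>)\<^sup>2\<close>, a quadratic in \<open>sqrt (ln k)\<close> with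
  positive leading coefficient \<open>1 - \<alpha>\<^sup>2\<close>.\<close>

lemma filterlim_real_mult_exp_neg_square:
  assumes "\<bar>\<alpha>\<bar> < 1"
  shows "filterlim (\<lambda>k. real k * exp (- (\<alpha> * sqrt (ln (real k)) + \<beta>)\<^sup>2)) at_top sequentially"
proof -
  let ?q = "\<lambda>x::real. - \<beta>\<^sup>2 + x * (- (2 * \<alpha> * \<beta>) + (1 - \<alpha>\<^sup>2) * x)"
  have "0 < 1 - \<alpha>\<^sup>2" using assms by (simp add: abs_square_less_1)
  then have "filterlim (\<lambda>x::real. (1 - \<alpha>\<^sup>2) * x) at_top at_top"
    by (intro filterlim_tendsto_pos_mult_at_top filterlim_ident) auto
  then have "filterlim (\<lambda>x::real. - (2 * \<alpha> * \<beta>) + (1 - \<alpha>\<^sup>2) * x) at_top at_top"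
    by (rule filterlim_tendsto_add_at_top[OF tendsto_const])
  then have q: "filterlim ?q at_top at_top"
    by (rule filterlim_tendsto_add_at_top[OF tendsto_const filterlim_at_top_mult_at_top[OF filterlim_ident]])
  have sqrt_ln: "filterlim (\<lambda>k. sqrt (ln (real k))) at_top sequentially"
    by (rule filterlim_compose[OF sqrt_at_top filterlim_compose[OF ln_at_top filterlim_real_sequentially]])
  have "eventually (\<lambda>k. exp (?q (sqrt (ln (real k)))) =
      real k * exp (- (\<alpha> * sqrt (ln (real k)) + \<beta>)\<^sup>2)) sequentially"
  proof (rule eventually_sequentiallyI[of 1])
    fix k :: nat
    assume "1 \<le> k"
    define L where "L = ln (real k)"
    have "sqrt L * sqrt L = L" using ln_of_nat_nonneg[of k] by (simp add: L_def)
    then have "?q (sqrt L) = L + - (\<alpha> * sqrt L + \<beta>)\<^sup>2"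
      by (simp add: power2_eq_square algebra_simps)
    moreover have "real k = exp L" using \<open>1 \<le> k\<close> by (simp add: L_def)
    ultimately show "exp (?q (sqrt (ln (real k)))) = real k * exp (- (\<alpha> * sqrt (ln (real k)) + \<beta>)\<^sup>2)"
      by (metis L_def exp_add)
  qed
  then show ?thesis
    using filterlim_compose[OF exp_at_top filterlim_compose[OF q sqrt_ln]] filterlim_cong by fastforce
qed

lemma tendsto_exp_neg_mult_at_top:
  fixes c :: real and f :: "'a \<Rightarrow> real"
  assumes "0 < c" "filterlim f at_top F"
  shows "((\<lambda>x. exp (- (c * f x))) \<longlongrightarrow> 0) F"
proof -
  have "filterlim (\<lambda>x. c * f x) at_top F"
    by (rule filterlim_tendsto_pos_mult_at_top[OF tendsto_const assms])
  then have "filterlim (\<lambda>x. - (c * f x)) at_bot F"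
    by (simp add: filterlim_uminus_at_top)
  then show ?thesis by (rule filterlim_compose[OF exp_at_bot])
qed

lemma phi_sqrt_two_mult: "phi (sqrt 2 * x) = exp (- x\<^sup>2) / sqrt (2 * pi)"
  unfolding phi_eq_exp by (simp add: power_mult_distrib)

lemma phi_square: "phi x ^ 2 = exp (- x\<^sup>2) / (2 * pi)"
  unfolding phi_eq_exp by (simp add: power_divide exp_double[symmetric])

lemma square_mult_sqrt_two_ln: "(c * sqrt (2 * ln (real k)))\<^sup>2 / 2 = c\<^sup>2 * ln (real k)"
  using ln_of_nat_nonneg[of k] by (simp add: power_mult_distrib)

lemma square_mult_two_sqrt_ln: "(c * (2 * sqrt (ln (real k))))\<^sup>2 / 4 = c\<^sup>2 * ln (real k)"
  using ln_of_nat_nonneg[of k] by (simp add: power_mult_distrib)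

text \<open>Split the integral at \<open>t = -s\<close>, where \<open>c = b + s\<close> with \<open>b > 1\<close> and \<open>s > 0\<close>.\<close>

lemma tendsto_mean_Phi_pow_above:
  assumes "1 < c"
  shows "(\<lambda>k. mean_Phi_pow k (c * sqrt (2 * ln (real k)))) \<longlonglongrightarrow> 1"
proof -
  define b s where "b = (1 + c) / 2" and "s = (c - 1) / 2"
  have "1 < b\<^sup>2" "0 < s\<^sup>2" using assms by (simp_all add: b_def s_def one_less_power)
  let ?lower = "\<lambda>k. (1 - real k * exp (- b\<^sup>2 * ln (real k))) * (1 - exp (- s\<^sup>2 * ln (real k)))"
  have lower: "?lower k \<le> mean_Phi_pow k (c * sqrt (2 * ln (real k)))" for k
  proof -
    define a where "a = sqrt (2 * ln (real k))"
    have "1 - real k * exp (- b\<^sup>2 * ln (real k)) \<le> Phi (b * a) ^ k"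
      using Phi_power_ge[of "b * a" k] square_mult_sqrt_two_ln[of b k] assms ln_of_nat_nonneg[of k]
      by (simp add: a_def b_def)
    moreover have "1 - exp (- s\<^sup>2 * ln (real k)) \<le> 1 - Phi (- (s * a))"
      using Phi_neg_le_exp[of "s * a"] square_mult_sqrt_two_ln[of s k] assms ln_of_nat_nonneg[of k]
      by (simp add: a_def s_def)
    moreover have "0 \<le> 1 - exp (- s\<^sup>2 * ln (real k))"
      using ln_of_nat_nonneg[of k] by simp
    ultimately have "?lower k \<le> Phi (b * a) ^ k * (1 - Phi (- (s * a)))"
      by (intro mult_mono) (auto simp: Phi_nonneg)
    also have "\<dots> \<le> mean_Phi_pow k (c * a)"
    proof -
      have "c * a - s * a = b * a" by (simp add: b_def s_def field_simps)
      then show ?thesis using mean_Phi_pow_ge[of "c * a" "s * a" k] by simp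
    qed
    finally show ?thesis unfolding a_def .
  qed
  have lim: "?lower \<longlonglongrightarrow> 1"
    using tendsto_mult[OF tendsto_diff[OF tendsto_const tendsto_real_mult_exp_neg_mult_ln[OF \<open>1 < b\<^sup>2\<close>]]
        tendsto_diff[OF tendsto_const tendsto_exp_neg_mult_ln[OF \<open>0 < s\<^sup>2\<close>]], of 1 1]
    by simp
  show ?thesis
    by (rule tendsto_sandwich[OF always_eventually always_eventually lim tendsto_const])
      (intro allI lower mean_Phi_pow_le_one)+
qed

text \<open>Split the integral at \<open>t = s\<close>, where \<open>c + s = \<alpha> < 1\<close>.\<close>

lemma tendsto_mean_Phi_pow_below:
  assumes "0 \<le> c" "c < 1"
  shows "(\<lambda>k. mean_Phi_pow k (c * sqrt (2 * ln (real k)))) \<longlonglongrightarrow> 0"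
proof -
  define \<alpha> s where "\<alpha> = (1 + c) / 2" and "s = (1 - c) / 2"
  have "\<bar>\<alpha>\<bar> < 1" "0 < s\<^sup>2" using assms by (simp_all add: \<alpha>_def s_def)
  define X where "X k = real k * exp (- (\<alpha> * sqrt (ln (real k)) + 1 / sqrt 2)\<^sup>2)" for k
  let ?upper = "\<lambda>k. exp (- (1 / sqrt (2 * pi) * X k)) + exp (- s\<^sup>2 * ln (real k))"
  have upper: "mean_Phi_pow k (c * sqrt (2 * ln (real k))) \<le> ?upper k" for k
  proof -
    define a where "a = sqrt (2 * ln (real k))"
    have "Phi (\<alpha> * a) ^ k \<le> exp (- (real k * phi (\<alpha> * a + 1)))"
      using assms ln_of_nat_nonneg[of k] by (intro Phi_power_le) (simp add: \<alpha>_def a_def)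
    also have "\<alpha> * a + 1 = sqrt 2 * (\<alpha> * sqrt (ln (real k)) + 1 / sqrt 2)"
      by (simp add: a_def real_sqrt_mult algebra_simps)
    finally have "Phi (\<alpha> * a) ^ k \<le> exp (- (1 / sqrt (2 * pi) * X k))"
      by (simp add: phi_sqrt_two_mult X_def)
    moreover have "1 - Phi (s * a) \<le> exp (- s\<^sup>2 * ln (real k))"
      using one_minus_Phi_le_exp[of "s * a"] square_mult_sqrt_two_ln[of s k] assms ln_of_nat_nonneg[of k]
      by (simp add: a_def s_def)
    moreover have "c * a + s * a = \<alpha> * a" by (simp add: \<alpha>_def s_def field_simps)
    then have "mean_Phi_pow k (c * a) \<le> Phi (\<alpha> * a) ^ k + (1 - Phi (s * a))"
      using mean_Phi_pow_le[of k "c * a" "s * a"] by simp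
    ultimately show ?thesis unfolding a_def by linarith
  qed
  have "filterlim X at_top sequentially"
    unfolding X_def by (rule filterlim_real_mult_exp_neg_square[OF \<open>\<bar>\<alpha>\<bar> < 1\<close>])
  then have lim: "?upper \<longlonglongrightarrow> 0"
    using tendsto_add[OF tendsto_exp_neg_mult_at_top[of "1 / sqrt (2 * pi)"]
        tendsto_exp_neg_mult_ln[OF \<open>0 < s\<^sup>2\<close>]]
    by simp
  show ?thesis
    by (rule tendsto_sandwich[OF always_eventually always_eventually tendsto_const lim])
      (intro allI upper mean_Phi_pow_nonneg zero_le_power)+
qed

lemma tendsto_mean_Phi_power_above:
  assumes "1 < c"
  shows "(\<lambda>k. mean_Phi_pow 1 (c * (2 * sqrt (ln (real k)))) ^ k) \<longlonglongrightarrow> 1"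
proof -
  let ?lower = "\<lambda>k. 1 - 2 * (real k * exp (- c\<^sup>2 * ln (real k)))"
  have lower: "?lower k \<le> mean_Phi_pow 1 (c * (2 * sqrt (ln (real k)))) ^ k" for k
    using mean_Phi_power_ge[of "c * (2 * sqrt (ln (real k)))" k] square_mult_two_sqrt_ln[of c k]
      assms ln_of_nat_nonneg[of k]
    by (simp add: mult.left_commute)
  have "1 < c\<^sup>2" using assms by (simp add: one_less_power)
  then have lim: "?lower \<longlonglongrightarrow> 1"
    using tendsto_diff[OF tendsto_const tendsto_mult[OF tendsto_const tendsto_real_mult_exp_neg_mult_ln],
        of "c\<^sup>2" 1 2]
    by simp
  have le_one: "mean_Phi_pow 1 h ^ k \<le> 1" for h k
    by (intro power_le_one mean_Phi_pow_nonneg mean_Phi_pow_le_one)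
  show ?thesis
    by (rule tendsto_sandwich[OF always_eventually always_eventually lim tendsto_const])
      (intro allI lower le_one)+
qed

lemma tendsto_mean_Phi_power_below:
  assumes "0 \<le> c" "c < 1"
  shows "(\<lambda>k. mean_Phi_pow 1 (c * (2 * sqrt (ln (real k)))) ^ k) \<longlonglongrightarrow> 0"
proof -
  define Y where "Y k = real k * exp (- (c * sqrt (ln (real k)) + 1)\<^sup>2)" for k
  let ?upper = "\<lambda>k. exp (- (1 / (2 * pi) * Y k))"
  have upper: "mean_Phi_pow 1 (c * (2 * sqrt (ln (real k)))) ^ k \<le> ?upper k" for k
    using mean_Phi_power_le[of "c * (2 * sqrt (ln (real k)))" k] assms ln_of_nat_nonneg[of k]
    by (simp add: phi_square Y_def)
  have "filterlim Y at_top sequentially"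
    unfolding Y_def using assms by (intro filterlim_real_mult_exp_neg_square) simp
  then have lim: "?upper \<longlonglongrightarrow> 0"
    by (intro tendsto_exp_neg_mult_at_top) simp_all
  show ?thesis
    by (rule tendsto_sandwich[OF always_eventually always_eventually tendsto_const lim])
      (intro allI upper mean_Phi_pow_nonneg zero_le_power)+
qed

section \<open>Asymptotics of the roots\<close>

lemma THE_root_between:
  fixes f :: "real \<Rightarrow> real"
  assumes "continuous_on UNIV f" "strict_mono f" "lo \<le> hi" "f lo < p" "p < f hi"
  shows "lo \<le> (THE h. f h = p) \<and> (THE h. f h = p) \<le> hi"
proof -
  obtain x where x: "lo \<le> x" "x \<le> hi" "f x = p"
    using IVT'[of f lo p hi] assms continuous_on_subset[OF assms(1)] by force
  have "(THE h. f h = p) = x"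
    using x(3) strict_mono_eq[OF assms(2)] by (intro the_equality) auto
  then show ?thesis using x by simp
qed

lemma asymp_equivI_eventually_bounds:
  fixes f g :: "nat \<Rightarrow> real"
  assumes bounds: "\<And>\<epsilon>. 0 < \<epsilon> \<Longrightarrow> \<epsilon> < 1 \<Longrightarrow>
      eventually (\<lambda>k. (1 - \<epsilon>) * g k \<le> f k \<and> f k \<le> (1 + \<epsilon>) * g k) sequentially"
    and pos: "eventually (\<lambda>k. 0 < g k) sequentially"
  shows "f \<sim>[sequentially] g"
proof (rule asymp_equivI', rule tendstoI)
  fix e :: real
  assume "0 < e"
  define \<epsilon> where "\<epsilon> = min (e / 2) (1 / 2)"
  have "0 < \<epsilon>" "\<epsilon> < 1" "\<epsilon> < e" using \<open>0 < e\<close> by (auto simp: \<epsilon>_def)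
  show "eventually (\<lambda>k. dist (f k / g k) 1 < e) sequentially"
    using eventually_conj[OF bounds[OF \<open>0 < \<epsilon>\<close> \<open>\<epsilon> < 1\<close>] pos]
  proof eventually_elim
    case (elim k)
    then have "1 - \<epsilon> \<le> f k / g k" "f k / g k \<le> 1 + \<epsilon>" by (auto simp: field_simps)
    then show ?case using \<open>\<epsilon> < e\<close> by (simp add: dist_real_def abs_le_iff)
  qed
qed

lemma asymp_equiv_THE_root:
  fixes f :: "nat \<Rightarrow> real \<Rightarrow> real" and g :: "nat \<Rightarrow> real"
  assumes "0 < p" "p < 1"
    and cont: "\<And>k. continuous_on UNIV (f k)"
    and mono: "eventually (\<lambda>k. strict_mono (f k)) sequentially"
    and pos: "eventually (\<lambda>k. 0 < g k) sequentially"
    and below: "\<And>c. 0 \<le> c \<Longrightarrow> c < 1 \<Longrightarrow> (\<lambda>k. f k (c * g k)) \<longlonglongrightarrow> 0"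
    and above: "\<And>c. 1 < c \<Longrightarrow> (\<lambda>k. f k (c * g k)) \<longlonglongrightarrow> 1"
  shows "(\<lambda>k. THE h. f k h = p) \<sim>[sequentially] g"
proof (rule asymp_equivI_eventually_bounds[OF _ pos])
  fix \<epsilon> :: real
  assume "0 < \<epsilon>" "\<epsilon> < 1"
  have "eventually (\<lambda>k. f k ((1 - \<epsilon>) * g k) < p) sequentially"
    using below[of "1 - \<epsilon>"] \<open>0 < \<epsilon>\<close> \<open>\<epsilon> < 1\<close> \<open>0 < p\<close> by (intro order_tendstoD(2)) auto
  moreover have "eventually (\<lambda>k. p < f k ((1 + \<epsilon>) * g k)) sequentially"
    using above[of "1 + \<epsilon>"] \<open>0 < \<epsilon>\<close> \<open>p < 1\<close> by (intro order_tendstoD(1)) auto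
  ultimately show "eventually (\<lambda>k. (1 - \<epsilon>) * g k \<le> (THE h. f k h = p) \<and>
      (THE h. f k h = p) \<le> (1 + \<epsilon>) * g k) sequentially"
    using mono pos
  proof eventually_elim
    case (elim k)
    then show ?case
      using \<open>0 < \<epsilon>\<close> by (intro THE_root_between cont) auto
  qed
qed

lemma h1_asymp_equiv:
  assumes "0 < p" "p < 1"
  shows "h1 p \<sim>[sequentially] (\<lambda>k. sqrt (2 * ln (real k)))"
proof -
  have "h1 p = (\<lambda>k. THE h. mean_Phi_pow k h = p)"
    unfolding h1_def mean_Phi_pow_def ..
  moreover have "\<dots> \<sim>[sequentially] (\<lambda>k. sqrt (2 * ln (real k)))"
  proof (rule asymp_equiv_THE_root[OF assms continuous_on_mean_Phi_pow])
    show "eventually (\<lambda>k. strict_mono (mean_Phi_pow k)) sequentially"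
      using eventually_gt_at_top[of 0] by eventually_elim (rule strict_mono_mean_Phi_pow)
    show "eventually (\<lambda>k. 0 < sqrt (2 * ln (real k))) sequentially"
      using eventually_gt_at_top[of 1] by eventually_elim simp
  qed (use tendsto_mean_Phi_pow_below tendsto_mean_Phi_pow_above in auto)
  ultimately show ?thesis by simp
qed

lemma h2_asymp_equiv:
  assumes "0 < p" "p < 1"
  shows "h2 p \<sim>[sequentially] (\<lambda>k. 2 * sqrt (ln (real k)))"
proof -
  have "h2 p = (\<lambda>k. THE h. mean_Phi_pow 1 h ^ k = p)"
    unfolding h2_def mean_Phi_pow_def by simp
  moreover have "\<dots> \<sim>[sequentially] (\<lambda>k. 2 * sqrt (ln (real k)))"
  proof (rule asymp_equiv_THE_root[OF assms])
    show "continuous_on UNIV (\<lambda>h. mean_Phi_pow 1 h ^ k)" for k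
      by (intro continuous_on_power continuous_on_mean_Phi_pow)
    show "eventually (\<lambda>k. strict_mono (\<lambda>h. mean_Phi_pow 1 h ^ k)) sequentially"
      using eventually_gt_at_top[of 0]
    proof eventually_elim
      case (elim k)
      then show ?case
        using strict_mono_mean_Phi_pow[of 1] mean_Phi_pow_nonneg
        by (auto intro!: strict_monoI power_strict_mono dest: strict_monoD)
    qed
    show "eventually (\<lambda>k. 0 < 2 * sqrt (ln (real k))) sequentially"
      using eventually_gt_at_top[of 1] by eventually_elim simp
  qed (use tendsto_mean_Phi_power_below tendsto_mean_Phi_power_above in auto)
  ultimately show ?thesis by simp
qed

theorem theorem6:
  fixes p :: real
  assumes "0 < p" and "p < 1"
  shows "(\<lambda>k. h2 p k) \<sim>[sequentially] (\<lambda>k. sqrt 2 * h1 p k) \<and>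
         (\<lambda>k. sqrt 2 * h1 p k) \<sim>[sequentially] (\<lambda>k. 2 * sqrt (ln (real k)))"
proof -
  have "(\<lambda>k. sqrt 2 * h1 p k) \<sim>[sequentially] (\<lambda>k. sqrt 2 * sqrt (2 * ln (real k)))"
    by (rule asymp_equiv_mult[OF asymp_equiv_refl h1_asymp_equiv[OF assms]])
  also have "(\<lambda>k. sqrt 2 * sqrt (2 * ln (real k))) = (\<lambda>k. 2 * sqrt (ln (real k)))"
    by (simp add: real_sqrt_mult flip: mult.assoc)
  finally have h1: "(\<lambda>k. sqrt 2 * h1 p k) \<sim>[sequentially] (\<lambda>k. 2 * sqrt (ln (real k)))" .
  have "(\<lambda>k. h2 p k) \<sim>[sequentially] (\<lambda>k. sqrt 2 * h1 p k)"
    using asymp_equiv_trans[OF h2_asymp_equiv[OF assms] asymp_equiv_symI[OF h1]] by simp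
  then show ?thesis using h1 ..
qed

end
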